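(* Let $q$ be a prime power, let $V = V(4,q)$ be the $4$-dimensional vector space over $\mathrm{GF}(q)$, and let $X$ be the set of $2$-dimensional subspaces (lines) of $V$, so $|X| = (q^2+1)(q^2+q+1)$. Let $Y \subseteq X$ be such that its characteristic function $f_Y$ has degree at most $1$, and write $|Y| = x(q^2+q+1)$ (with $x$ a real number; in fact an integer). Then for every $1$-dimensional subspace $P$ and every $3$-dimensional subspace $H$ of $V$ with $P \subseteq H$, $$x = |\{ L \in Y : P \subseteq L\}| + |\{ L \in Y : L \subseteq H\}| - (q+1)\,|\{L \in Y : P \subseteq L \subseteq H\}|.$$
   Context: For a $1$-dimensional subspace $P$ of $V$, let $x_P\colon X \to \{0,1\}$ be defined by $x_P(L) = 1$ if $P \subseteq L$ and $x_P(L) = 0$ otherwise. A function $f\colon X \to \mathbb{R}$ has degree at most $1$ if it can be written as $f = c + \sum_P c_P x_P$ (sum over all $1$-dimensional subspaces $P$ of $V$) for real constants $c, c_P$. The characteristic function $f_Y$ of $Y \subseteq X$ takes value $1$ on $Y$ and $0$ elsewhere. (Equivalently, $\deg f \le 1$ means $f$ lies in the sum of the first two eigenspaces $V_0 + V_1$ of the Grassmann scheme $J_q(4,2)$ in its standard cometric (Q-polynomial) ordering.) *)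

theory Defs
  imports "HOL-Analysis.Analysis"
begin

text \<open>V = V(4,q) is modelled as the coordinate space 'a^4 over a finite field 'a
(q = CARD('a)); subspaces and dimension are those of the library interpretation
vec : vector_space (*s).\<close>

definition subspaces_of_dim :: "nat \<Rightarrow> (('a::field)^4) set set" where
  "subspaces_of_dim k = {S. vec.subspace S \<and> vec.dim S = k}"

abbreviation points :: "(('a::field)^4) set set" where
  "points \<equiv> subspaces_of_dim 1"

abbreviation lines :: "(('a::field)^4) set set" where
  "lines \<equiv> subspaces_of_dim 2"

abbreviation planes :: "(('a::field)^4) set set" where
  "planes \<equiv> subspaces_of_dim 3"

definition xP :: "(('a::field)^4) set \<Rightarrow> (('a::field)^4) set \<Rightarrow> real" where
  "xP P L = (if P \<subseteq> L then 1 else 0)"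

definition degree_le_1 :: "((('a::{field,finite})^4) set \<Rightarrow> real) \<Rightarrow> bool" where
  "degree_le_1 f \<longleftrightarrow> (\<exists>(c::real) (cP :: ('a^4) set \<Rightarrow> real).
      \<forall>L \<in> lines. f L = c + (\<Sum>P\<in>points. cP P * xP P L))"

definition char_fun :: "(('a::field)^4) set set \<Rightarrow> ('a^4) set \<Rightarrow> real" where
  "char_fun Y L = (if L \<in> Y then 1 else 0)"

end

theory Submission
  imports Defs
begin

text \<open>Both sides of the identity are linear in \<open>f\<^sub>Y = c + \<Sum>\<^sub>Q c\<^sub>Q x\<^sub>Q\<close>, so they
can be compared term by term. Summing over all \<open>(q\<^sup>2+1)(q\<^sup>2+q+1)\<close> lines, each point
lying on \<open>q\<^sup>2+q+1\<close> of them, gives \<open>x = c(q\<^sup>2+1) + \<Sum>\<^sub>Q c\<^sub>Q\<close>. On the right, a point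
lies on \<open>q\<^sup>2+q+1\<close> lines, a plane contains \<open>q\<^sup>2+q+1\<close> lines and a flag \<open>P \<subseteq> H\<close> lies
on \<open>q+1\<close>, so the constant contributes \<open>c(2(q\<^sup>2+q+1) - (q+1)\<^sup>2) = c(q\<^sup>2+1)\<close>; and the
term \<open>x\<^sub>Q\<close> contributes exactly \<open>c\<^sub>Q\<close>, as one checks in the three cases \<open>Q = P\<close>,
\<open>Q \<subseteq> H\<close> and \<open>Q \<nsubseteq> H\<close> using that two distinct points span a unique line. The line
counts come from double counting pairs of linearly independent vectors.\<close>

lemma card_span_independent:
  fixes B :: "('a::{field,finite}^'n) set"
  assumes "vec.independent B"
  shows "card (vec.span B) = CARD('a) ^ card B"
proof -
  have "finite B" by simp
  then show ?thesis using assms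
  proof (induction B rule: finite_induct)
    case empty then show ?case by simp
  next
    case (insert b B)
    have ind: "vec.independent B" and nb: "b \<notin> vec.span B"
      using insert.prems insert.hyps by (auto simp: vec.independent_insert)
    let ?g = "\<lambda>(a::'a, t). t + a *s b"
    have "vec.span (insert b B) = ?g ` (UNIV \<times> vec.span B)"
    proof (intro equalityI subsetI)
      fix x assume "x \<in> vec.span (insert b B)"
      then obtain k where "x - k *s b \<in> vec.span B" by (auto simp: vec.span_breakdown_eq)
      then show "x \<in> ?g ` (UNIV \<times> vec.span B)"
        by (intro image_eqI[of _ _ "(k, x - k *s b)"]) auto
    next
      fix x assume "x \<in> ?g ` (UNIV \<times> vec.span B)"
      then obtain a t where "x = t + a *s b" "t \<in> vec.span B" by auto
      then show "x \<in> vec.span (insert b B)"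
        unfolding vec.span_breakdown_eq by (intro exI[of _ a]) simp
    qed
    moreover have "inj_on ?g (UNIV \<times> vec.span B)"
    proof (rule inj_onI, clarify)
      fix a t a' t' assume t: "t \<in> vec.span B" and t': "t' \<in> vec.span B"
        and eq: "t + a *s b = t' + a' *s b"
      show "a = a' \<and> t = t'"
      proof (rule ccontr)
        assume "\<not> (a = a' \<and> t = t')"
        with eq have "a \<noteq> a'" by auto
        have "(a - a') *s b = t' - t" using eq
          by (simp add: algebra_simps vec.scale_left_diff_distrib)
        then have "inverse (a - a') *s (t' - t) = b"
          using \<open>a \<noteq> a'\<close> by (metis right_minus_eq vec.scale_left_imp_eq vec.scale_scale
              field_class.field_inverse vec.scale_one)
        moreover have "inverse (a - a') *s (t' - t) \<in> vec.span B"
          using t t' by (intro vec.span_scale vec.span_diff)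
        ultimately show False using nb by simp
      qed
    qed
    ultimately have "card (vec.span (insert b B)) = CARD('a) * card (vec.span B)"
      by (simp add: card_image card_cartesian_product)
    then show ?case using insert.IH ind insert.hyps by simp
  qed
qed

lemma card_subspace:
  fixes S :: "('a::{field,finite}^'n) set"
  assumes "vec.subspace S"
  shows "card S = CARD('a) ^ vec.dim S"
proof -
  obtain B where B: "B \<subseteq> S" "vec.independent B" "S \<subseteq> vec.span B" "card B = vec.dim S"
    using vec.basis_exists[of S] by metis
  then have "vec.span B = S" using vec.span_subspace assms by blast
  then show ?thesis using card_span_independent[OF B(2)] B(4) by simp
qed

lemma CARD_field_ge_2: "CARD('a::{field,finite}) \<ge> 2"
  using card_mono[of UNIV "{0::'a, 1}"] by simp

lemma subspace_dim_1_eq_span: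
  fixes P :: "('a::field^'n) set"
  assumes "vec.subspace P" "vec.dim P = 1"
  obtains u where "u \<noteq> 0" "P = vec.span {u}"
proof -
  obtain B where B: "B \<subseteq> P" "vec.independent B" "P \<subseteq> vec.span B" "card B = 1"
    using vec.basis_exists[of P] assms(2) by metis
  then obtain u where "B = {u}" by (auto simp: card_Suc_eq)
  with B have "u \<noteq> 0" "P = vec.span {u}"
    using vec.dependent_zero vec.span_subspace[OF B(1,3) assms(1)] by auto
  then show thesis by (rule that)
qed

lemma dim_span_pair:
  fixes u v :: "'a::field^'n"
  assumes "u \<noteq> 0" "v \<notin> vec.span {u}"
  shows "vec.dim (vec.span {u, v}) = 2"
proof -
  have "v \<noteq> u" using assms vec.span_base by blast
  then have "vec.independent {v, u}" "card {v, u} = 2"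
    using assms by (simp_all add: vec.independent_insert)
  then show ?thesis by (metis insert_commute vec.dim_span_eq_card_independent)
qed

lemma span_pair_eq_subspace_dim_2:
  fixes u v :: "'a::field^'n"
  assumes "u \<noteq> 0" "v \<notin> vec.span {u}"
    and "vec.subspace L" "vec.dim L = 2" "u \<in> L" "v \<in> L"
  shows "vec.span {u, v} = L"
  using assms dim_span_pair[OF assms(1,2)]
  by (intro vec.subspace_dim_equal vec.subspace_span vec.span_minimal) auto

lemma card_eq_card_mult_fibre:
  assumes "finite A" "finite B" "f ` A \<subseteq> B"
    and "\<And>b. b \<in> B \<Longrightarrow> real (card {a\<in>A. f a = b}) = k"
  shows "real (card A) = real (card B) * k"
proof -
  have "A = (\<Union>b\<in>B. {a\<in>A. f a = b})" using assms(3) by auto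
  also have "card \<dots> = (\<Sum>b\<in>B. card {a\<in>A. f a = b})"
    using assms(1,2) by (intro card_UN_disjoint) auto
  finally have "real (card A) = (\<Sum>b\<in>B. real (card {a\<in>A. f a = b}))" by simp
  then show ?thesis using assms(4) by simp
qed

lemma span_singleton_subset:
  fixes u :: "'a::field^'n"
  assumes "vec.subspace S" "u \<in> S"
  shows "vec.span {u} \<subseteq> S"
  using assms by (intro vec.span_minimal) auto

lemma card_subspace_diff_span_singleton:
  fixes S :: "('a::{field,finite}^'n) set"
  assumes "vec.subspace S" "u \<in> S" "u \<noteq> 0"
  shows "real (card (S - vec.span {u})) = real CARD('a) ^ vec.dim S - real CARD('a)"
proof -
  have "card (vec.span {u}) = CARD('a)" using card_span_independent[of "{u}"] assms(3) by simp
  moreover have "card (vec.span {u}) \<le> card S"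
    using span_singleton_subset[OF assms(1,2)] by (simp add: card_mono)
  ultimately show ?thesis
    using span_singleton_subset[OF assms(1,2)] card_subspace[OF assms(1)]
    by (simp add: card_Diff_subset)
qed

lemma card_lines_through_vector:
  fixes W :: "('a::{field,finite}^'n) set"
  assumes "vec.subspace W" "u \<in> W" "u \<noteq> 0"
  shows "real (card {L. vec.subspace L \<and> vec.dim L = 2 \<and> u \<in> L \<and> L \<subseteq> W})
           * (real CARD('a) ^ 2 - real CARD('a)) = real CARD('a) ^ vec.dim W - real CARD('a)"
proof -
  let ?B = "{L. vec.subspace L \<and> vec.dim L = 2 \<and> u \<in> L \<and> L \<subseteq> W}"
  let ?f = "\<lambda>v. vec.span {u, v}"
  have "real (card (W - vec.span {u})) = real (card ?B) * (real CARD('a) ^ 2 - real CARD('a))"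
  proof (rule card_eq_card_mult_fibre)
    show "?f ` (W - vec.span {u}) \<subseteq> ?B"
    proof (rule image_subsetI)
      fix v assume "v \<in> W - vec.span {u}"
      then show "?f v \<in> ?B"
        using assms dim_span_pair[OF assms(3)] vec.span_minimal[of "{u, v}" W]
        by (auto intro: vec.span_base vec.subspace_span)
    qed
    fix L assume L: "L \<in> ?B"
    have "{v \<in> W - vec.span {u}. ?f v = L} = L - vec.span {u}"
      using L assms(3) span_pair_eq_subspace_dim_2[of u _ L] by (auto intro: vec.span_base)
    then show "real (card {v \<in> W - vec.span {u}. ?f v = L}) = real CARD('a) ^ 2 - real CARD('a)"
      using card_subspace_diff_span_singleton[of L u] L assms(3) by simp
  qed simp_all
  then show ?thesis using card_subspace_diff_span_singleton[OF assms] by simp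
qed

definition independent_pairs :: "('a::field^'n) set \<Rightarrow> (('a^'n) \<times> ('a^'n)) set" where
  "independent_pairs S = (SIGMA u:S - {0}. S - vec.span {u})"

lemma card_independent_pairs:
  fixes S :: "('a::{field,finite}^'n) set"
  assumes "vec.subspace S"
  shows "real (card (independent_pairs S))
           = (real CARD('a) ^ vec.dim S - 1) * (real CARD('a) ^ vec.dim S - real CARD('a))"
proof -
  have "real (card (independent_pairs S)) = (\<Sum>u\<in>S - {0}. real (card (S - vec.span {u})))"
    unfolding independent_pairs_def by (simp add: card_SigmaI)
  also have "\<dots> = real (card (S - {0})) * (real CARD('a) ^ vec.dim S - real CARD('a))"
    using card_subspace_diff_span_singleton[OF assms] by simp
  also have "real (card (S - {0})) = real CARD('a) ^ vec.dim S - 1"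
    using card_subspace[OF assms] vec.subspace_0[OF assms] by (simp add: card_Diff_singleton)
  finally show ?thesis .
qed

lemma card_lines_in_subspace:
  fixes W :: "('a::{field,finite}^'n) set"
  assumes "vec.subspace W"
  shows "real (card {L. vec.subspace L \<and> vec.dim L = 2 \<and> L \<subseteq> W})
           * ((real CARD('a) ^ 2 - 1) * (real CARD('a) ^ 2 - real CARD('a)))
         = (real CARD('a) ^ vec.dim W - 1) * (real CARD('a) ^ vec.dim W - real CARD('a))"
proof -
  let ?B = "{L. vec.subspace L \<and> vec.dim L = 2 \<and> L \<subseteq> W}"
  let ?f = "\<lambda>(u, v). vec.span {u, v}"
  have "real (card (independent_pairs W))
          = real (card ?B) * ((real CARD('a) ^ 2 - 1) * (real CARD('a) ^ 2 - real CARD('a)))"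
  proof (rule card_eq_card_mult_fibre)
    show "?f ` independent_pairs W \<subseteq> ?B"
    proof (rule image_subsetI)
      fix p assume "p \<in> independent_pairs W"
      then obtain u v where "p = (u, v)" "u \<in> W" "u \<noteq> 0" "v \<in> W" "v \<notin> vec.span {u}"
        by (auto simp: independent_pairs_def)
      then show "?f p \<in> ?B"
        using assms dim_span_pair vec.span_minimal[of "{u, v}" W] by (auto intro: vec.subspace_span)
    qed
    fix L assume L: "L \<in> ?B"
    have "{p \<in> independent_pairs W. ?f p = L} = independent_pairs L"
      using L span_pair_eq_subspace_dim_2[of _ _ L]
      by (auto simp: independent_pairs_def intro: vec.span_base)
    then show "real (card {p \<in> independent_pairs W. ?f p = L})
                 = (real CARD('a) ^ 2 - 1) * (real CARD('a) ^ 2 - real CARD('a))"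
      using card_independent_pairs[of L] L by simp
  qed simp_all
  then show ?thesis using card_independent_pairs[OF assms] by simp
qed

lemma lines_through_two_points:
  fixes P Q :: "('a::field^'n) set"
  assumes "vec.subspace P" "vec.dim P = 1" "vec.subspace Q" "vec.dim Q = 1" "P \<noteq> Q"
  shows "{L. vec.subspace L \<and> vec.dim L = 2 \<and> P \<subseteq> L \<and> Q \<subseteq> L} = {vec.span (P \<union> Q)}"
proof -
  obtain u where u: "u \<noteq> 0" "P = vec.span {u}" using subspace_dim_1_eq_span assms(1,2) .
  obtain v where v: "v \<noteq> 0" "Q = vec.span {v}" using subspace_dim_1_eq_span assms(3,4) .
  have uv: "v \<notin> vec.span {u}"
  proof
    assume "v \<in> vec.span {u}"
    then have "Q \<subseteq> P" unfolding u(2) v(2) by (intro vec.span_minimal) auto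
    then have "Q = P" using assms(1-4) by (intro vec.subspace_dim_equal) auto
    with assms(5) show False by simp
  qed
  have "u \<in> P" "v \<in> Q" using u v by (simp_all add: vec.span_base)
  have "P \<subseteq> vec.span {u, v}" "Q \<subseteq> vec.span {u, v}"
    unfolding u(2) v(2) by (simp_all add: vec.span_mono)
  with \<open>u \<in> P\<close> \<open>v \<in> Q\<close> have span_eq: "vec.span (P \<union> Q) = vec.span {u, v}"
    by (intro equalityI vec.span_minimal vec.span_mono) (auto intro: vec.subspace_span)
  show ?thesis
  proof (intro equalityI subsetI)
    fix L assume L: "L \<in> {L. vec.subspace L \<and> vec.dim L = 2 \<and> P \<subseteq> L \<and> Q \<subseteq> L}"
    with \<open>u \<in> P\<close> \<open>v \<in> Q\<close> have "u \<in> L" "v \<in> L" by auto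
    with L have "vec.span {u, v} = L" using span_pair_eq_subspace_dim_2[OF u(1) uv] by simp
    then show "L \<in> {vec.span (P \<union> Q)}" using span_eq by simp
  next
    have "P \<subseteq> vec.span (P \<union> Q)" "Q \<subseteq> vec.span (P \<union> Q)"
      using vec.span_superset[of "P \<union> Q"] by auto
    moreover have "vec.dim (vec.span (P \<union> Q)) = 2"
      unfolding span_eq by (rule dim_span_pair[OF u(1) uv])
    ultimately show "L \<in> {L. vec.subspace L \<and> vec.dim L = 2 \<and> P \<subseteq> L \<and> Q \<subseteq> L}"
      if "L \<in> {vec.span (P \<union> Q)}" for L
      using that vec.subspace_span by simp
  qed
qed

lemma mem_subspaces_of_dim: "S \<in> subspaces_of_dim k \<longleftrightarrow> vec.subspace S \<and> vec.dim S = k"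
  by (simp add: subspaces_of_dim_def)

lemma real_CARD_field_powers_ne_0:
  "real CARD('a::{field,finite}) ^ 2 - real CARD('a) \<noteq> 0" "real CARD('a) ^ 2 - 1 \<noteq> 0"
proof -
  have q: "real CARD('a) \<ge> 2" using CARD_field_ge_2[where 'a='a] by simp
  then have "real CARD('a) * real CARD('a) \<ge> 2 * real CARD('a)" by (intro mult_right_mono) auto
  with q show "real CARD('a) ^ 2 - real CARD('a) \<noteq> 0" "real CARD('a) ^ 2 - 1 \<noteq> 0"
    unfolding power2_eq_square by linarith+
qed

lemma card_lines_through_point_within:
  fixes Q W :: "('a::{field,finite}^4) set"
  assumes "Q \<in> points" "vec.subspace W" "Q \<subseteq> W"
  shows "real (card {L\<in>lines. Q \<subseteq> L \<and> L \<subseteq> W}) * (real CARD('a) ^ 2 - real CARD('a))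
           = real CARD('a) ^ vec.dim W - real CARD('a)"
proof -
  obtain u where u: "u \<noteq> 0" "Q = vec.span {u}"
    using subspace_dim_1_eq_span assms(1) by (auto simp: mem_subspaces_of_dim)
  have "u \<in> Q" by (simp add: u(2) vec.span_base)
  have "Q \<subseteq> L \<longleftrightarrow> u \<in> L" if "vec.subspace L" for L
    using \<open>u \<in> Q\<close> span_singleton_subset[OF that, of u] u(2) by blast
  then have "{L\<in>lines. Q \<subseteq> L \<and> L \<subseteq> W} = {L. vec.subspace L \<and> vec.dim L = 2 \<and> u \<in> L \<and> L \<subseteq> W}"
    by (auto simp: mem_subspaces_of_dim)
  moreover have "u \<in> W" using \<open>u \<in> Q\<close> assms(3) by blast
  ultimately show ?thesis using card_lines_through_vector[OF assms(2) _ u(1)] by simp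
qed

lemma card_lines_through_point:
  fixes Q :: "('a::{field,finite}^4) set"
  assumes "Q \<in> points"
  shows "real (card {L\<in>lines. Q \<subseteq> L}) = real CARD('a) ^ 2 + real CARD('a) + 1"
proof -
  let ?q = "real CARD('a)"
  have "real (card {L\<in>lines. Q \<subseteq> L}) * (?q ^ 2 - ?q) = ?q ^ 4 - ?q"
    using card_lines_through_point_within[OF assms, of UNIV] vec_dim_card[where 'a='a and 'n=4]
    by (simp del: vec.dim_UNIV)
  also have "\<dots> = (?q ^ 2 + ?q + 1) * (?q ^ 2 - ?q)" by algebra
  finally show ?thesis using real_CARD_field_powers_ne_0[where 'a='a] by simp
qed

lemma card_lines_through_point_in_plane:
  fixes Q H :: "('a::{field,finite}^4) set"
  assumes "Q \<in> points" "H \<in> planes" "Q \<subseteq> H"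
  shows "real (card {L\<in>lines. Q \<subseteq> L \<and> L \<subseteq> H}) = real CARD('a) + 1"
proof -
  let ?q = "real CARD('a)"
  have "real (card {L\<in>lines. Q \<subseteq> L \<and> L \<subseteq> H}) * (?q ^ 2 - ?q) = ?q ^ 3 - ?q"
    using card_lines_through_point_within[OF assms(1) _ assms(3)] assms(2)
    by (simp add: mem_subspaces_of_dim)
  also have "\<dots> = (?q + 1) * (?q ^ 2 - ?q)" by algebra
  finally show ?thesis using real_CARD_field_powers_ne_0[where 'a='a] by simp
qed

lemma card_lines_in_plane:
  fixes H :: "('a::{field,finite}^4) set"
  assumes "H \<in> planes"
  shows "real (card {L\<in>lines. L \<subseteq> H}) = real CARD('a) ^ 2 + real CARD('a) + 1"
proof -
  let ?q = "real CARD('a)"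
  have "real (card {L\<in>lines. L \<subseteq> H}) * ((?q ^ 2 - 1) * (?q ^ 2 - ?q)) = (?q ^ 3 - 1) * (?q ^ 3 - ?q)"
    using card_lines_in_subspace[of H] assms by (simp add: subspaces_of_dim_def)
  also have "\<dots> = (?q ^ 2 + ?q + 1) * ((?q ^ 2 - 1) * (?q ^ 2 - ?q))" by algebra
  finally show ?thesis using real_CARD_field_powers_ne_0[where 'a='a] by simp
qed

lemma card_lines:
  "real (card (lines :: ('a::{field,finite}^4) set set))
     = (real CARD('a) ^ 2 + 1) * (real CARD('a) ^ 2 + real CARD('a) + 1)"
proof -
  let ?q = "real CARD('a)"
  have "real (card (lines :: ('a^4) set set)) * ((?q ^ 2 - 1) * (?q ^ 2 - ?q))
          = (?q ^ 4 - 1) * (?q ^ 4 - ?q)"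
    using card_lines_in_subspace[of "UNIV :: ('a^4) set"] vec_dim_card[where 'a='a and 'n=4]
    by (simp add: subspaces_of_dim_def del: vec.dim_UNIV)
  also have "\<dots> = (?q ^ 2 + 1) * (?q ^ 2 + ?q + 1) * ((?q ^ 2 - 1) * (?q ^ 2 - ?q))" by algebra
  finally show ?thesis using real_CARD_field_powers_ne_0[where 'a='a] by simp
qed

lemma lines_through_two_points_eq:
  fixes P Q :: "('a::field^4) set"
  assumes "P \<in> points" "Q \<in> points" "P \<noteq> Q"
  shows "{L\<in>lines. P \<subseteq> L \<and> Q \<subseteq> L} = {vec.span (P \<union> Q)}"
  using lines_through_two_points[of P Q] assms by (simp add: subspaces_of_dim_def)

lemma flag_incidence_identity:
  fixes P H Q :: "('a::{field,finite}^4) set"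
  assumes "P \<in> points" "H \<in> planes" "P \<subseteq> H" "Q \<in> points"
  shows "real (card {L\<in>lines. P \<subseteq> L \<and> Q \<subseteq> L}) + real (card {L\<in>lines. L \<subseteq> H \<and> Q \<subseteq> L})
           - (real CARD('a) + 1) * real (card {L\<in>lines. P \<subseteq> L \<and> L \<subseteq> H \<and> Q \<subseteq> L}) = 1"
proof -
  consider "Q = P" | "Q \<noteq> P" "Q \<subseteq> H" | "\<not> Q \<subseteq> H" using assms(3) by blast
  then show ?thesis
  proof cases
    case 1
    then have "{L\<in>lines. L \<subseteq> H \<and> Q \<subseteq> L} = {L\<in>lines. P \<subseteq> L \<and> L \<subseteq> H}"
      "{L\<in>lines. P \<subseteq> L \<and> L \<subseteq> H \<and> Q \<subseteq> L} = {L\<in>lines. P \<subseteq> L \<and> L \<subseteq> H}"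
      by auto
    then show ?thesis
      using 1 card_lines_through_point[OF assms(1)] card_lines_through_point_in_plane[OF assms(1-3)]
      by (simp add: power2_eq_square algebra_simps)
  next
    case 2
    have "vec.span (P \<union> Q) \<subseteq> H"
      using assms 2 by (simp add: vec.span_minimal mem_subspaces_of_dim)
    then have "{L\<in>lines. P \<subseteq> L \<and> L \<subseteq> H \<and> Q \<subseteq> L} = {vec.span (P \<union> Q)}"
      using lines_through_two_points_eq[OF assms(1,4)] 2(1) by blast
    moreover have "{L\<in>lines. L \<subseteq> H \<and> Q \<subseteq> L} = {L\<in>lines. Q \<subseteq> L \<and> L \<subseteq> H}" by auto
    ultimately show ?thesis
      using lines_through_two_points_eq[OF assms(1,4)] 2
        card_lines_through_point_in_plane[OF assms(4,2) 2(2)] by auto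
  next
    case 3
    then have "{L\<in>lines. L \<subseteq> H \<and> Q \<subseteq> L} = {}"
      and "{L\<in>lines. P \<subseteq> L \<and> L \<subseteq> H \<and> Q \<subseteq> L} = {}"
      and "{L\<in>lines. P \<subseteq> L \<and> Q \<subseteq> L} = {vec.span (P \<union> Q)}"
      using lines_through_two_points_eq[OF assms(1,4)] assms(3) by auto
    then show ?thesis by (simp only:) simp
  qed
qed

lemma card_filter_degree_le_1:
  fixes Y :: "(('a::{field,finite})^4) set set"
  assumes "Y \<subseteq> lines"
    and "\<forall>L\<in>lines. char_fun Y L = c + (\<Sum>Q\<in>points. cP Q * xP Q L)"
  shows "real (card {L\<in>Y. R L}) = c * real (card {L\<in>lines. R L})
           + (\<Sum>Q\<in>points. cP Q * real (card {L\<in>lines. R L \<and> Q \<subseteq> L}))"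
proof -
  let ?S = "{L\<in>lines. R L}"
  have incidences: "(\<Sum>L\<in>?S. xP Q L) = real (card {L\<in>lines. R L \<and> Q \<subseteq> L})" for Q
    by (simp add: xP_def sum.inter_filter[symmetric] conj_ac)
  have "{L\<in>?S. L \<in> Y} = {L\<in>Y. R L}" using assms(1) by auto
  then have "real (card {L\<in>Y. R L}) = (\<Sum>L\<in>?S. char_fun Y L)"
    by (simp add: char_fun_def sum.inter_filter[symmetric])
  also have "\<dots> = (\<Sum>L\<in>?S. c + (\<Sum>Q\<in>points. cP Q * xP Q L))"
    using assms(2) by (intro sum.cong) auto
  also have "\<dots> = c * real (card ?S) + (\<Sum>Q\<in>points. cP Q * (\<Sum>L\<in>?S. xP Q L))"
    by (simp add: sum.distrib sum.swap[of _ ?S] sum_distrib_left)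
  finally show ?thesis by (simp only: incidences)
qed

lemma card_degree_le_1:
  fixes Y :: "(('a::{field,finite})^4) set set"
  assumes "Y \<subseteq> lines"
    and "\<forall>L\<in>lines. char_fun Y L = c + (\<Sum>Q\<in>points. cP Q * xP Q L)"
  shows "real (card Y) = (c * (real CARD('a) ^ 2 + 1) + (\<Sum>Q\<in>points. cP Q))
                           * (real CARD('a) ^ 2 + real CARD('a) + 1)"
proof -
  have "real (card Y) = c * real (card (lines :: ('a^4) set set))
          + (\<Sum>Q\<in>points. cP Q * real (card {L\<in>lines. Q \<subseteq> L}))"
    using card_filter_degree_le_1[OF assms, of "\<lambda>_. True"] by simp
  also have "(\<Sum>Q\<in>points. cP Q * real (card {L\<in>lines. Q \<subseteq> L}))
               = (\<Sum>Q\<in>points. cP Q) * (real CARD('a) ^ 2 + real CARD('a) + 1)"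
    by (simp add: card_lines_through_point sum_distrib_right)
  finally show ?thesis by (simp add: card_lines algebra_simps)
qed

lemma flag_count_degree_le_1:
  fixes Y :: "(('a::{field,finite})^4) set set"
  assumes "Y \<subseteq> lines"
    and "\<forall>L\<in>lines. char_fun Y L = c + (\<Sum>Q\<in>points. cP Q * xP Q L)"
    and "P \<in> points" "H \<in> planes" "P \<subseteq> H"
  shows "real (card {L \<in> Y. P \<subseteq> L}) + real (card {L \<in> Y. L \<subseteq> H})
           - (real CARD('a) + 1) * real (card {L \<in> Y. P \<subseteq> L \<and> L \<subseteq> H})
         = c * (real CARD('a) ^ 2 + 1) + (\<Sum>Q\<in>points. cP Q)"
proof -
  let ?q = "real CARD('a)"
  let ?N = "\<lambda>R. real (card {L\<in>lines. R L})"
  note count = card_filter_degree_le_1[OF assms(1,2)]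
  have "real (card {L \<in> Y. P \<subseteq> L}) + real (card {L \<in> Y. L \<subseteq> H})
          - (?q + 1) * real (card {L \<in> Y. P \<subseteq> L \<and> L \<subseteq> H})
        = c * (2 * (?q ^ 2 + ?q + 1) - (?q + 1) * (?q + 1))
          + (\<Sum>Q\<in>points. cP Q * (?N (\<lambda>L. P \<subseteq> L \<and> Q \<subseteq> L) + ?N (\<lambda>L. L \<subseteq> H \<and> Q \<subseteq> L)
                                   - (?q + 1) * ?N (\<lambda>L. P \<subseteq> L \<and> L \<subseteq> H \<and> Q \<subseteq> L)))"
    using card_lines_through_point[OF assms(3)] card_lines_in_plane[OF assms(4)]
      card_lines_through_point_in_plane[OF assms(3-5)]
    by (simp add: count algebra_simps sum.distrib sum_subtractf sum_distrib_left)
  also have "\<dots> = c * (?q ^ 2 + 1) + (\<Sum>Q\<in>points. cP Q)"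
    using flag_incidence_identity[OF assms(3-5)] by (simp add: power2_eq_square algebra_simps)
  finally show ?thesis .
qed

theorem mainTheorem2:
  fixes Y :: "(('a::{field,finite})^4) set set" and x :: real
  assumes "Y \<subseteq> lines"
    and "degree_le_1 (char_fun Y)"
    and "real (card Y) = x * (real CARD('a)^2 + real CARD('a) + 1)"
  shows "\<forall>P H. P \<in> points \<and> H \<in> planes \<and> P \<subseteq> H \<longrightarrow>
           x = real (card {L \<in> Y. P \<subseteq> L}) + real (card {L \<in> Y. L \<subseteq> H})
               - (real CARD('a) + 1) * real (card {L \<in> Y. P \<subseteq> L \<and> L \<subseteq> H})"
proof (intro allI impI)
  fix P H :: "('a^4) set"
  assume PH: "P \<in> points \<and> H \<in> planes \<and> P \<subseteq> H"
  obtain c cP where f: "\<forall>L\<in>lines. char_fun Y L = c + (\<Sum>Q\<in>points. cP Q * xP Q L)"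
    using assms(2) unfolding degree_le_1_def by blast
  have "real CARD('a) ^ 2 + real CARD('a) + 1 > 0" by (simp add: add_pos_nonneg)
  then have "x = c * (real CARD('a) ^ 2 + 1) + (\<Sum>Q\<in>points. cP Q)"
    using card_degree_le_1[OF assms(1) f] assms(3) by simp
  with flag_count_degree_le_1[OF assms(1) f] PH
  show "x = real (card {L \<in> Y. P \<subseteq> L}) + real (card {L \<in> Y. L \<subseteq> H})
              - (real CARD('a) + 1) * real (card {L \<in> Y. P \<subseteq> L \<and> L \<subseteq> H})" by simp
qed

end
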